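(* Let $D\subset\mathbb{C}^n$ be a domain and let $f:D\to\mathbb{C}^m$ be a $\mathcal{C}^1$ map such that for every $p\in D$ either $\frac{\partial f}{\partial z}(p)=0$ or $\frac{\partial f}{\partial\bar z}(p)=0$. Then $f$ is holomorphic or antiholomorphic on $D$.
   Context: For $f=(f_1,\dots,f_m)$, $\frac{\partial f}{\partial z}(p)=0$ means $\frac{\partial f_j}{\partial z_k}(p)=0$ for all $j=1,\dots,m$ and $k=1,\dots,n$, and similarly $\frac{\partial f}{\partial\bar z}(p)=0$ means $\frac{\partial f_j}{\partial\bar z_k}(p)=0$ for all $j,k$ (equivalently, the real derivative of $f$ at $p$ is anti-$\mathbb{C}$-linear, resp. $\mathbb{C}$-linear). *)

theory Defs
  imports "HOL-Analysis.Analysis"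
begin

text \<open>Points of C^n are vectors complex^'n (n = CARD('n)); maps C^n to C^m are
functions complex^'n to complex^'m.  Differentiability is real (Frechet).\<close>

definition C1_on :: "(complex^'n) set \<Rightarrow> (complex^'n \<Rightarrow> complex^'m) \<Rightarrow> bool" where
  "C1_on D f \<longleftrightarrow> (\<exists>f' :: complex^'n \<Rightarrow> ((complex^'n) \<Rightarrow>\<^sub>L (complex^'m)).
      (\<forall>x\<in>D. (f has_derivative blinfun_apply (f' x)) (at x)) \<and> continuous_on D f')"

text \<open>With d/dx_k = derivative in direction e_k
and d/dy_k = derivative in direction i e_k:
  d/dz_k = (d/dx_k - i d/dy_k)/2,  d/dzbar_k = (d/dx_k + i d/dy_k)/2.\<close>
definition dz :: "(complex^'n \<Rightarrow> complex^'m) \<Rightarrow> complex^'n \<Rightarrow> 'n \<Rightarrow> complex^'m" where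
  "dz f p k = (1/2 :: complex) *s
     (frechet_derivative f (at p) (axis k 1) - \<i> *s frechet_derivative f (at p) (axis k \<i>))"

definition dzbar :: "(complex^'n \<Rightarrow> complex^'m) \<Rightarrow> complex^'n \<Rightarrow> 'n \<Rightarrow> complex^'m" where
  "dzbar f p k = (1/2 :: complex) *s
     (frechet_derivative f (at p) (axis k 1) + \<i> *s frechet_derivative f (at p) (axis k \<i>))"

definition holomorphic_Cn :: "(complex^'n) set \<Rightarrow> (complex^'n \<Rightarrow> complex^'m) \<Rightarrow> bool" where
  "holomorphic_Cn D f \<longleftrightarrow> (\<forall>p\<in>D. f differentiable (at p) \<and> (\<forall>k. dzbar f p k = 0))"

definition antiholomorphic_Cn :: "(complex^'n) set \<Rightarrow> (complex^'n \<Rightarrow> complex^'m) \<Rightarrow> bool" where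
  "antiholomorphic_Cn D f \<longleftrightarrow> (\<forall>p\<in>D. f differentiable (at p) \<and> (\<forall>k. dz f p k = 0))"

end

theory Submission
  imports Defs "HOL-Complex_Analysis.Conformal_Mappings"
begin

text \<open>
  Suppose \<open>df/dz\<close> vanishes on a ball \<open>B(q,r)\<close> and \<open>B(q,R) \<subseteq> D\<close>. For \<open>z \<in> B(q,R)\<close> take a
  component \<open>s(t)\<close> of \<open>df/dz(q + t(z - q)) \<cdot> (z - q)\<close>. It is continuous, vanishes for small
  \<open>|t|\<close>, and where it is nonzero \<open>df/dz \<noteq> 0\<close>, hence \<open>df/dzbar = 0\<close>, so \<open>s\<close> is the complex
  derivative of \<open>t \<mapsto> f(q + t(z - q))\<close> there and therefore holomorphic. The maximum modulus
  principle for \<open>s(t) / t^N\<close> on \<open>{s \<noteq> 0}\<close> gives \<open>|s(1)| \<le> M / T^N\<close> with \<open>T > 1\<close> for every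
  \<open>N\<close>, so \<open>s(1) = 0\<close>. As this holds for every base point near \<open>q\<close>, \<open>df/dz = 0\<close> on all of
  \<open>B(q,R)\<close>: the interior of the zero set of \<open>df/dz\<close> is closed in \<open>D\<close>. If \<open>df/dzbar \<noteq> 0\<close>
  somewhere, \<open>df/dz\<close> vanishes near that point by continuity, hence on the connected set \<open>D\<close>.
\<close>

definition dz_apply :: "(complex^'n \<Rightarrow> complex^'m) \<Rightarrow> complex^'n \<Rightarrow> complex^'n \<Rightarrow> complex^'m" where
  "dz_apply f p v = (\<Sum>k\<in>UNIV. v$k *s dz f p k)"

lemma norm_vector_smult:
  fixes x :: "'a::real_normed_div_algebra ^ 'n"
  shows "norm (c *s x) = norm c * norm x"
  by (simp add: norm_vec_def norm_mult L2_set_right_distrib)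

lemma norm_axis: "norm (axis k c :: 'a::real_normed_vector ^ 'n) = norm c"
proof -
  have "(\<Sum>i\<in>UNIV. (norm ((axis k c :: 'a ^ 'n) $ i))\<^sup>2) = (\<Sum>i\<in>UNIV. if i = k then (norm c)\<^sup>2 else 0)"
    by (rule sum.cong) (auto simp: axis_def)
  then show ?thesis
    by (simp add: norm_vec_def L2_set_def)
qed

lemma dz_apply_add: "dz_apply f p (v + w) = dz_apply f p v + dz_apply f p w"
  by (simp add: dz_apply_def vector_sadd_rdistrib sum.distrib)

lemma dz_apply_scale: "dz_apply f p (c *s v) = c *s dz_apply f p v"
  by (simp add: dz_apply_def vec_eq_iff sum_component sum_distrib_left mult.assoc)

lemma dz_apply_axis: "dz_apply f p (axis k c) = c *s dz f p k"
proof -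
  have "dz_apply f p (axis k c) = (\<Sum>l\<in>UNIV. if l = k then c *s dz f p l else 0)"
    unfolding dz_apply_def by (rule sum.cong) (auto simp: axis_def)
  then show ?thesis by simp
qed

lemma dz_apply_component: "dz_apply f p v $ j = (\<Sum>k\<in>UNIV. v$k * dz f p k $ j)"
  by (simp add: dz_apply_def sum_component)

lemma real_combination_eq_wirtinger:
  fixes c x y :: complex
  shows "Re c *\<^sub>R x + Im c *\<^sub>R y = c * ((x - \<i> * y) / 2) + cnj c * ((x + \<i> * y) / 2)"
  by (simp add: complex_eq_iff field_simps)

lemma has_derivative_wirtinger_expansion:
  fixes f :: "complex^'n \<Rightarrow> complex^'m"
  assumes "(f has_derivative F) (at p)"
  shows "F v = dz_apply f p v + (\<Sum>k\<in>UNIV. cnj (v$k) *s dzbar f p k)"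
proof -
  have F: "F = frechet_derivative f (at p)"
    using assms by (rule frechet_derivative_at)
  have lin: "linear F"
    using assms by (rule has_derivative_linear)
  have "v = (\<Sum>k\<in>UNIV. Re (v$k) *\<^sub>R axis k 1 + Im (v$k) *\<^sub>R axis k \<i>)"
    by (simp add: vec_eq_iff sum_component axis_def complex_eq_iff if_distrib cong: if_cong)
  then have "F v = F (\<Sum>k\<in>UNIV. Re (v$k) *\<^sub>R axis k 1 + Im (v$k) *\<^sub>R axis k \<i>)"
    by (rule arg_cong)
  also have "\<dots> = (\<Sum>k\<in>UNIV. Re (v$k) *\<^sub>R F (axis k 1) + Im (v$k) *\<^sub>R F (axis k \<i>))"
    by (simp add: linear_sum[OF lin] linear_add[OF lin] linear_scale[OF lin])
  also have "\<dots> = dz_apply f p v + (\<Sum>k\<in>UNIV. cnj (v$k) *s dzbar f p k)"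
    by (simp add: dz_apply_def dz_def dzbar_def F vec_eq_iff sum_component sum.distrib[symmetric]
        real_combination_eq_wirtinger) (simp add: field_simps)
  finally show ?thesis .
qed

lemma C1_on_differentiable: "C1_on D f \<Longrightarrow> p \<in> D \<Longrightarrow> f differentiable (at p)"
  unfolding C1_on_def differentiable_def by blast

lemma C1_on_continuous_frechet_derivative:
  assumes "C1_on D f"
  shows "continuous_on D (\<lambda>p. frechet_derivative f (at p) v)"
proof -
  obtain F' where der: "\<forall>p\<in>D. (f has_derivative blinfun_apply (F' p)) (at p)"
    and cont: "continuous_on D F'"
    using assms unfolding C1_on_def by blast
  have "continuous_on D (\<lambda>p. blinfun_apply (F' p) v)"
    using cont by (intro continuous_intros)
  then show ?thesis
    by (rule continuous_on_eq) (simp add: frechet_derivative_at[OF der[rule_format]])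
qed

lemma C1_on_continuous_dz: "C1_on D f \<Longrightarrow> continuous_on D (\<lambda>p. dz f p k)"
  unfolding dz_def vector_scalar_mult_def
  by (intro continuous_intros C1_on_continuous_frechet_derivative)

lemma C1_on_continuous_dzbar: "C1_on D f \<Longrightarrow> continuous_on D (\<lambda>p. dzbar f p k)"
  unfolding dzbar_def vector_scalar_mult_def
  by (intro continuous_intros C1_on_continuous_frechet_derivative)

lemma C1_on_continuous_dz_apply: "C1_on D f \<Longrightarrow> continuous_on D (\<lambda>p. dz_apply f p v $ j)"
  unfolding dz_apply_component by (intro continuous_intros C1_on_continuous_dz)

lemma has_field_derivative_along_complex_line:
  fixes f :: "complex^'n \<Rightarrow> complex^'m"
  assumes "f differentiable (at (q + t *s e))" and "\<forall>k. dzbar f (q + t *s e) k = 0"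
  shows "((\<lambda>t. f (q + t *s e) $ j) has_field_derivative dz_apply f (q + t *s e) e $ j) (at t)"
proof -
  obtain F where F: "(f has_derivative F) (at (q + t *s e))"
    using assms(1) unfolding differentiable_def by blast
  have "linear (\<lambda>t::complex. t *s e)"
    by (rule linearI) (simp_all add: vec_eq_iff algebra_simps)
  then have "((\<lambda>t. t *s e) has_derivative (\<lambda>\<tau>. \<tau> *s e)) (at t)"
    by (simp add: linear_conv_bounded_linear bounded_linear_imp_has_derivative)
  then have "((\<lambda>t. q + t *s e) has_derivative (\<lambda>\<tau>. \<tau> *s e)) (at t)"
    by (intro derivative_eq_intros) auto
  from diff_chain_at[OF this F]
  have "((\<lambda>t. f (q + t *s e) $ j) has_derivative (\<lambda>\<tau>. F (\<tau> *s e) $ j)) (at t)"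
    unfolding o_def by (rule bounded_linear.has_derivative[OF bounded_linear_vec_nth])
  moreover have "F (\<tau> *s e) $ j = dz_apply f (q + t *s e) e $ j * \<tau>" for \<tau>
    using has_derivative_wirtinger_expansion[OF F, of "\<tau> *s e"] assms(2)
    by (simp add: dz_apply_scale mult.commute)
  ultimately show ?thesis
    by (simp add: has_field_derivative_def)
qed

lemma open_nonzero_set:
  fixes s :: "'a::topological_space \<Rightarrow> 'b::t1_space"
  assumes "continuous_on S s" and "open S"
  shows "open {t \<in> S. s t \<noteq> c}"
proof -
  have "open (S \<inter> s -` (- {c}))"
    by (intro continuous_open_preimage assms open_Compl closed_singleton)
  moreover have "{t \<in> S. s t \<noteq> c} = S \<inter> s -` (- {c})"
    by auto
  ultimately show ?thesis
    by simp
qed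

lemma frontier_nonzero_set_ball:
  fixes s :: "'a::metric_space \<Rightarrow> 'b::{t1_space, zero}"
  assumes "continuous_on (ball a R) s" and "t \<in> frontier {x \<in> ball a R. s x \<noteq> 0}"
  shows "dist a t = R \<or> s t = 0"
proof -
  let ?S = "{x \<in> ball a R. s x \<noteq> 0}"
  have "t \<notin> ?S"
    using assms open_nonzero_set[OF assms(1)] by (auto simp: frontier_def interior_open)
  moreover have "closure ?S \<subseteq> cball a R"
    by (rule closure_minimal) auto
  then have "dist a t \<le> R"
    using assms(2) by (auto simp: frontier_def)
  ultimately show ?thesis
    by auto
qed

lemma holomorphic_off_zeros_power_bound:
  fixes s :: "complex \<Rightarrow> complex"
  assumes cont: "continuous_on (cball 0 R) s"
    and hol: "s holomorphic_on {t \<in> ball 0 R. s t \<noteq> 0}"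
    and "r > 0" and zero: "\<forall>t\<in>ball 0 r. s t = 0"
    and M: "\<forall>t\<in>cball 0 R. norm (s t) \<le> M"
    and \<xi>: "s \<xi> \<noteq> 0" "norm \<xi> < R"
  shows "norm (s \<xi>) \<le> M * (norm \<xi> / R) ^ N"
proof -
  define S where "S = {t \<in> ball 0 R. s t \<noteq> 0}"
  have "0 < R"
    using \<xi> by (meson le_less_trans norm_ge_zero)
  then have M0: "0 \<le> M"
    using M norm_ge_zero[of "s 0"] by (metis centre_in_cball less_imp_le order_trans)
  have cont_ball: "continuous_on (ball 0 R) s"
    using cont ball_subset_cball continuous_on_subset by blast
  have "open S"
    unfolding S_def by (rule open_nonzero_set[OF cont_ball open_ball])
  have clS: "closure S \<subseteq> cball 0 R - ball 0 r"
    using zero by (intro closure_minimal) (auto simp: S_def)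
  define g where "g t = s t / t ^ N" for t
  have "norm (g \<xi>) \<le> M / R ^ N"
  proof (rule maximum_modulus_frontier[where S = S and f = g])
    show "g holomorphic_on interior S"
      unfolding g_def interior_open[OF \<open>open S\<close>]
      using hol zero \<open>r > 0\<close> by (intro holomorphic_intros) (auto simp: S_def)
    have "continuous_on (cball 0 R - ball 0 r) g"
      unfolding g_def using \<open>r > 0\<close>
      by (intro continuous_intros continuous_on_subset[OF cont]) auto
    then show "continuous_on (closure S) g"
      using clS continuous_on_subset by blast
    show "bounded S"
      by (rule bounded_subset[of "ball 0 R"]) (auto simp: S_def)
    show "norm (g t) \<le> M / R ^ N" if t: "t \<in> frontier S" for t
    proof -
      consider "norm t = R" | "s t = 0"
        using frontier_nonzero_set_ball[OF cont_ball t[unfolded S_def]] by auto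
      then show ?thesis
        using M M0 \<open>0 < R\<close> by cases (auto simp: g_def norm_divide norm_power divide_right_mono)
    qed
    show "\<xi> \<in> S"
      using \<xi> by (simp add: S_def)
  qed
  moreover have "\<xi> \<noteq> 0"
    using zero \<xi>(1) \<open>r > 0\<close> by auto
  ultimately show ?thesis
    using \<open>0 < R\<close> by (simp add: g_def norm_divide norm_power power_divide field_simps)
qed

lemma holomorphic_off_zeros_vanishing_extends:
  fixes s :: "complex \<Rightarrow> complex"
  assumes cont: "continuous_on (cball 0 R) s"
    and hol: "s holomorphic_on {t \<in> ball 0 R. s t \<noteq> 0}"
    and "r > 0" and zero: "\<forall>t\<in>ball 0 r. s t = 0"
    and \<xi>: "norm \<xi> < R"
  shows "s \<xi> = 0"
proof -
  obtain M where M: "\<forall>t\<in>cball 0 R. norm (s t) \<le> M"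
    using compact_imp_bounded[OF compact_continuous_image[OF cont compact_cball]]
    by (auto simp: bounded_iff)
  have R: "0 < R"
    using \<xi> by (meson le_less_trans norm_ge_zero)
  show ?thesis
  proof (rule ccontr)
    assume "s \<xi> \<noteq> 0"
    have "(\<lambda>N. M * (norm \<xi> / R) ^ N) \<longlonglongrightarrow> M * 0"
      using \<xi> R by (intro tendsto_intros) simp
    moreover have "norm (s \<xi>) \<le> M * (norm \<xi> / R) ^ N" for N
      using holomorphic_off_zeros_power_bound[OF cont hol \<open>r > 0\<close> zero M \<open>s \<xi> \<noteq> 0\<close> \<xi>] .
    ultimately have "norm (s \<xi>) \<le> 0"
      by (intro LIMSEQ_le_const) auto
    with \<open>s \<xi> \<noteq> 0\<close> show False
      by simp
  qed
qed

lemma C1_on_continuous_dz_apply_along_line: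
  assumes C1: "C1_on D f" and line: "\<forall>t\<in>U. q + t *s e \<in> D"
  shows "continuous_on U (\<lambda>t. dz_apply f (q + t *s e) e $ j)"
proof -
  have "continuous_on U (\<lambda>t. q + t *s e)"
    unfolding vector_scalar_mult_def by (intro continuous_intros)
  then show ?thesis
    using line by (intro continuous_on_compose2[OF C1_on_continuous_dz_apply[OF C1]]) auto
qed

lemma dz_apply_along_line_holomorphic_off_zeros:
  fixes f :: "complex^'n \<Rightarrow> complex^'m"
  assumes C1: "C1_on D f"
    and alt: "\<forall>p\<in>D. (\<forall>k. dz f p k = 0) \<or> (\<forall>k. dzbar f p k = 0)"
    and "open U" and line: "\<forall>t\<in>U. q + t *s e \<in> D"
  shows "(\<lambda>t. dz_apply f (q + t *s e) e $ j) holomorphic_on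
           {t \<in> U. dz_apply f (q + t *s e) e $ j \<noteq> 0}"
proof (rule derivative_is_holomorphic)
  show "open {t \<in> U. dz_apply f (q + t *s e) e $ j \<noteq> 0}"
    by (rule open_nonzero_set[OF C1_on_continuous_dz_apply_along_line[OF C1 line] \<open>open U\<close>])
  fix t assume t: "t \<in> {t \<in> U. dz_apply f (q + t *s e) e $ j \<noteq> 0}"
  then have "q + t *s e \<in> D"
    using line by blast
  moreover have "\<not> (\<forall>k. dz f (q + t *s e) k = 0)"
  proof
    assume "\<forall>k. dz f (q + t *s e) k = 0"
    then have "dz_apply f (q + t *s e) e = 0"
      by (simp add: dz_apply_def)
    with t show False
      by simp
  qed
  ultimately have "\<forall>k. dzbar f (q + t *s e) k = 0"
    using alt by blast
  with \<open>q + t *s e \<in> D\<close>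
  show "((\<lambda>t. f (q + t *s e) $ j) has_field_derivative dz_apply f (q + t *s e) e $ j) (at t)"
    by (intro has_field_derivative_along_complex_line C1_on_differentiable[OF C1])
qed

lemma dz_apply_radial_vanishing:
  fixes f :: "complex^'n \<Rightarrow> complex^'m"
  assumes C1: "C1_on D f"
    and alt: "\<forall>p\<in>D. (\<forall>k. dz f p k = 0) \<or> (\<forall>k. dzbar f p k = 0)"
    and "r > 0" and zero: "\<forall>w\<in>ball q r. \<forall>k. dz f w k = 0"
    and sub: "ball q R \<subseteq> D" and z: "z \<in> ball q R"
  shows "dz_apply f z (z - q) = 0"
proof (cases "z = q")
  case True
  then show ?thesis by (simp add: dz_apply_def)
next
  case False
  define e where "e = z - q"
  have e: "0 < norm e" "norm e < R"
    using False z by (auto simp: e_def dist_norm norm_minus_commute)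
  define T where "T = (1 + R / norm e) / 2"
  have T: "1 < T" "T * norm e < R"
    using e by (auto simp: T_def field_simps)
  have line_dist: "dist q (q + t *s e) = norm t * norm e" for t
    by (simp add: dist_norm norm_vector_smult)
  have line: "\<forall>t\<in>cball 0 T. q + t *s e \<in> D"
  proof
    fix t :: complex assume "t \<in> cball 0 T"
    then have "norm t * norm e \<le> T * norm e"
      using e by (simp add: mult_right_mono)
    then show "q + t *s e \<in> D"
      using sub T line_dist[of t] by auto
  qed
  have "dz_apply f (q + 1 *s e) e $ j = 0" for j
  proof (rule holomorphic_off_zeros_vanishing_extends[where s = "\<lambda>t. dz_apply f (q + t *s e) e $ j"])
    show "continuous_on (cball 0 T) (\<lambda>t. dz_apply f (q + t *s e) e $ j)"
      by (rule C1_on_continuous_dz_apply_along_line[OF C1 line])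
    show "(\<lambda>t. dz_apply f (q + t *s e) e $ j) holomorphic_on
            {t \<in> ball 0 T. dz_apply f (q + t *s e) e $ j \<noteq> 0}"
      using line by (intro dz_apply_along_line_holomorphic_off_zeros[OF C1 alt]) auto
    show "0 < r / norm e"
      using \<open>r > 0\<close> e by simp
    show "\<forall>t\<in>ball 0 (r / norm e). dz_apply f (q + t *s e) e $ j = 0"
      using zero e line_dist by (simp add: dz_apply_def field_simps)
    show "norm (1::complex) < T"
      using T by simp
  qed
  then show ?thesis
    by (simp add: vec_eq_iff e_def)
qed

lemma dz_vanishing_extends_to_ball:
  fixes f :: "complex^'n \<Rightarrow> complex^'m"
  assumes C1: "C1_on D f"
    and alt: "\<forall>p\<in>D. (\<forall>k. dz f p k = 0) \<or> (\<forall>k. dzbar f p k = 0)"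
    and "r > 0" and zero: "\<forall>w\<in>ball q r. \<forall>k. dz f w k = 0"
    and sub: "ball q R \<subseteq> D" and z: "z \<in> ball q R"
  shows "dz f z k = 0"
proof -
  define \<delta> where "\<delta> = min r (R - dist q z) / 3"
  have \<delta>: "0 < \<delta>" "\<delta> < r" "dist q z + 2 * \<delta> < R"
    using \<open>r > 0\<close> z by (auto simp: \<delta>_def min_def field_simps)
  \<comment> \<open>\<open>dz_apply f z (z - q)\<close> is affine in the base point \<open>q\<close>; shifting \<open>q\<close> along axis \<open>k\<close> isolates \<open>dz f z k\<close>.\<close>
  define q' where "q' = q - axis k (complex_of_real \<delta>)"
  have q': "dist q q' = \<delta>"
    using \<delta> by (simp add: q'_def dist_norm norm_axis)
  have shrink: "ball q' (\<rho> - \<delta>) \<subseteq> ball q \<rho>" for \<rho>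
    using q' by (simp add: ball_subset_ball_iff dist_commute)
  have "dz_apply f z (z - q') = 0"
  proof (rule dz_apply_radial_vanishing[OF C1 alt])
    show "0 < r - \<delta>"
      using \<delta> by simp
    show "\<forall>w\<in>ball q' (r - \<delta>). \<forall>k. dz f w k = 0"
      using zero shrink by blast
    show "ball q' (R - \<delta>) \<subseteq> D"
      using sub shrink by blast
    show "z \<in> ball q' (R - \<delta>)"
      using \<delta> q' dist_triangle[of q' z q] by (simp add: dist_commute)
  qed
  moreover have "dz_apply f z (z - q) = 0"
    by (rule dz_apply_radial_vanishing[OF C1 alt \<open>r > 0\<close> zero sub z])
  moreover have "z - q' = (z - q) + axis k (complex_of_real \<delta>)"
    by (simp add: q'_def)
  ultimately have "complex_of_real \<delta> *s dz f z k = 0"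
    by (simp add: dz_apply_add dz_apply_axis)
  then show ?thesis
    using \<delta> by (simp add: vec_eq_iff)
qed

lemma dz_vanishing_propagates:
  fixes f :: "complex^'n \<Rightarrow> complex^'m"
  assumes "open D" and "connected D" and C1: "C1_on D f"
    and alt: "\<forall>p\<in>D. (\<forall>k. dz f p k = 0) \<or> (\<forall>k. dzbar f p k = 0)"
    and "p \<in> D" and "r > 0" and zero: "\<forall>w\<in>ball p r. \<forall>k. dz f w k = 0"
  shows "\<forall>w\<in>D. \<forall>k. dz f w k = 0"
proof -
  define V where "V = interior {w. \<forall>k. dz f w k = 0}"
  have V_iff: "q \<in> V \<longleftrightarrow> (\<exists>r>0. \<forall>w\<in>ball q r. \<forall>k. dz f w k = 0)" for q
    by (auto simp: V_def mem_interior subset_iff)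
  have "D \<inter> closure V \<subseteq> V"
  proof
    fix q assume q: "q \<in> D \<inter> closure V"
    obtain \<epsilon> where "\<epsilon> > 0" "ball q \<epsilon> \<subseteq> D"
      using \<open>open D\<close> q openE by blast
    moreover have "\<exists>q'\<in>V. dist q' q < \<epsilon> / 2"
      using q \<open>\<epsilon> > 0\<close> closure_approachable[of q V] half_gt_zero[of \<epsilon>] by blast
    then obtain q' where "q' \<in> V" "dist q' q < \<epsilon> / 2"
      by blast
    moreover have "ball q' (\<epsilon> / 2) \<subseteq> ball q \<epsilon>"
      using \<open>dist q' q < \<epsilon> / 2\<close> by (simp add: ball_subset_ball_iff dist_commute)
    ultimately have "\<forall>w\<in>ball q' (\<epsilon> / 2). \<forall>k. dz f w k = 0"
      using dz_vanishing_extends_to_ball[OF C1 alt] V_iff by (metis subset_trans)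
    moreover have "ball q (\<epsilon> / 2 - dist q' q) \<subseteq> ball q' (\<epsilon> / 2)"
      by (simp add: ball_subset_ball_iff dist_commute)
    ultimately have "\<forall>w\<in>ball q (\<epsilon> / 2 - dist q' q). \<forall>k. dz f w k = 0"
      by blast
    then show "q \<in> V"
      unfolding V_iff using \<open>dist q' q < \<epsilon> / 2\<close> by (intro exI[of _ "\<epsilon> / 2 - dist q' q"]) simp
  qed
  then have "closedin (top_of_set D) (D \<inter> V)"
    by (auto simp: closedin_closed intro!: exI[of _ "closure V"] dest: closure_subset[THEN subsetD])
  moreover have "openin (top_of_set D) (D \<inter> V)"
    by (simp add: V_def openin_open_Int)
  moreover have "p \<in> D \<inter> V"
    using \<open>p \<in> D\<close> \<open>r > 0\<close> zero V_iff by blast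
  ultimately have "D \<inter> V = D"
    using \<open>connected D\<close> unfolding connected_clopen by blast
  then show ?thesis
    by (auto simp: V_def dest: interior_subset[THEN subsetD])
qed

theorem lemma9:
  fixes D :: "(complex^'n) set" and f :: "complex^'n \<Rightarrow> complex^'m"
  assumes "open D" and "connected D"
    and "C1_on D f"
    and "\<forall>p\<in>D. (\<forall>k. dz f p k = 0) \<or> (\<forall>k. dzbar f p k = 0)"
  shows "holomorphic_Cn D f \<or> antiholomorphic_Cn D f"
proof (cases "\<forall>p\<in>D. \<forall>k. dzbar f p k = 0")
  case True
  then show ?thesis
    using C1_on_differentiable[OF assms(3)] by (simp add: holomorphic_Cn_def)
next
  case False
  then obtain p k where p: "p \<in> D" "dzbar f p k \<noteq> 0"
    by blast
  obtain r1 where "r1 > 0" and r1: "\<forall>w. dist p w < r1 \<longrightarrow> dzbar f w k \<noteq> 0"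
    using continuous_on_open_avoid[OF C1_on_continuous_dzbar[OF assms(3)] assms(1) p] by blast
  obtain r2 where "r2 > 0" and r2: "ball p r2 \<subseteq> D"
    using assms(1) p(1) openE by blast
  have "0 < min r1 r2"
    using \<open>r1 > 0\<close> \<open>r2 > 0\<close> by simp
  moreover have "\<forall>w\<in>ball p (min r1 r2). \<forall>k. dz f w k = 0"
    using r1 r2 assms(4) by fastforce
  ultimately have "\<forall>w\<in>D. \<forall>k. dz f w k = 0"
    by (rule dz_vanishing_propagates[OF assms p(1)])
  then show ?thesis
    using C1_on_differentiable[OF assms(3)] by (simp add: antiholomorphic_Cn_def)
qed

end
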